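(* Let $u$ be a fast decreasing distribution on $\mathbb R^D$ (so that it defines a linear functional on $\mathbb C[\boldsymbol x]$), let $\mathcal Q_2\in\mathbb C[\boldsymbol x]$ have complex zero set $Z(\mathcal Q_2)$ disjoint from $\operatorname{supp}u$, and let $\check u$ be a linear functional on $\mathbb C[\boldsymbol x]$ with $\mathcal Q_2\check u=u$. Assume $u$ and $\check u$ are quasi-definite, with quasi-tau matrices $H_{[l]}$ and $\check H_{[l]}$ respectively, and let $\check{\boldsymbol J}=(\check J_1,\dots,\check J_D)$ with $\check J_a=\check S\Lambda_a\check S^{-1}$. Then for every $k\ge1$ $$\det\big((\mathcal Q_2(\check{\boldsymbol J}))^{[k]}\big)=\prod_{l=0}^{k-1}\frac{\det H_{[l]}}{\det\check H_{[l]}},$$ and in particular $(\mathcal Q_2(\check{\boldsymbol J}))^{[k]}$ is nonsingular.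
   Context: $D\ge1$, $\boldsymbol x=(x_1,\dots,x_D)^\top$, $\mathbb C[\boldsymbol x]$ complex polynomials. For $k\in\mathbb Z_+$, $[k]=\{\boldsymbol\alpha\in\mathbb Z_+^D:|\boldsymbol\alpha|=k\}$, $|[k]|=\binom{D+k-1}{k}$. Multi-indices are ordered by graded lexicographic order; $\chi(\boldsymbol x)$ is the semi-infinite column vector of all monomials $\boldsymbol x^{\boldsymbol\alpha}$ in this order, with blocks $\chi_{[k]}=(\boldsymbol x^{\boldsymbol\alpha})_{\boldsymbol\alpha\in[k]}$. Semi-infinite matrices are partitioned accordingly into blocks $A_{[k],[l]}\in\mathbb C^{|[k]|\times|[l]|}$, and $A^{[k]}$ denotes the truncation to block rows and columns $0,\dots,k-1$. Spectral matrices: $(\Lambda_a)_{\boldsymbol\alpha,\boldsymbol\beta}=\delta_{\boldsymbol\alpha+\boldsymbol e_a,\boldsymbol\beta}$, $a=1,\dots,D$; for a polynomial $Q$, $Q(\boldsymbol\Lambda)=Q(\Lambda_1,\dots,\Lambda_D)$ and similarly $Q(\check{\boldsymbol J})$. For a linear functional $u$, $\langle Qu,P\rangle:=\langle u,QP\rangle$; its moment matrix is $G=\langle u,\chi\chi^\top\rangle$ (entrywise); $u$ is quasi-definite if $\det G^{[k]}\neq0$ for all $k\ge1$, and then $G=S^{-1}HS^{-\top}$ with $S$ block lower unitriangular and $H$ block diagonal with blocks $H_{[k]}$ (quasi-tau matrices). The same notation with a check refers to $\check u$. *)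

theory Defs
  imports Complex_Main "HOL-Library.Poly_Mapping" "HOL-Combinatorics.Permutations"
begin

(* Multi-indices in D = CARD('n) variables, polynomials, semi-infinite matrices
   indexed by multi-indices. *)
type_synonym 'n mi = "'n \<Rightarrow>\<^sub>0 nat"
type_synonym 'n mpoly = "'n mi \<Rightarrow>\<^sub>0 complex"
type_synonym 'n smat = "'n mi \<Rightarrow> 'n mi \<Rightarrow> complex"

definition mdeg :: "('n::finite) mi \<Rightarrow> nat" where
  "mdeg \<alpha> = (\<Sum>a\<in>UNIV. Poly_Mapping.lookup \<alpha> a)"

definition monomial :: "'n mi \<Rightarrow> 'n mpoly" where
  "monomial \<alpha> = Poly_Mapping.single \<alpha> 1"

definition cscale :: "complex \<Rightarrow> 'n mpoly \<Rightarrow> 'n mpoly" where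
  "cscale c P = Poly_Mapping.single 0 c * P"

definition lin_functional :: "('n mpoly \<Rightarrow> complex) \<Rightarrow> bool" where
  "lin_functional u \<longleftrightarrow> (\<forall>P Q. u (P + Q) = u P + u Q) \<and> (\<forall>c P. u (cscale c P) = c * u P)"

definition moment_matrix :: "('n mpoly \<Rightarrow> complex) \<Rightarrow> 'n smat" where
  "moment_matrix u \<alpha> \<beta> = u (monomial \<alpha> * monomial \<beta>)"

definition det_on :: "'a set \<Rightarrow> ('a \<Rightarrow> 'a \<Rightarrow> complex) \<Rightarrow> complex" where
  "det_on I A = (\<Sum>p | p permutes I. of_int (sign p) * (\<Prod>i\<in>I. A i (p i)))"

(* index set of the truncation A^[k]: block rows/columns 0..k-1 *)
definition trunc_idx :: "nat \<Rightarrow> ('n::finite) mi set" where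
  "trunc_idx k = {\<alpha>. mdeg \<alpha> < k}"

definition block_idx :: "nat \<Rightarrow> ('n::finite) mi set" where
  "block_idx l = {\<alpha>. mdeg \<alpha> = l}"

definition quasi_definite :: "(('n::finite) mpoly \<Rightarrow> complex) \<Rightarrow> bool" where
  "quasi_definite u \<longleftrightarrow> (\<forall>k\<ge>1. det_on (trunc_idx k) (moment_matrix u) \<noteq> 0)"

(* product of semi-infinite matrices; well defined when the left factor has finite rows *)
definition mmult :: "'n smat \<Rightarrow> 'n smat \<Rightarrow> 'n smat" where
  "mmult A B i j = (\<Sum>l\<in>{l. A i l \<noteq> 0}. A i l * B l j)"

definition mtrans :: "'n smat \<Rightarrow> 'n smat" where
  "mtrans A i j = A j i"

definition mident :: "'n smat" where
  "mident i j = (if i = j then 1 else 0)"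

definition block_lower_unitriangular :: "('n::finite) smat \<Rightarrow> bool" where
  "block_lower_unitriangular S \<longleftrightarrow>
     (\<forall>\<alpha> \<beta>. mdeg \<alpha> < mdeg \<beta> \<longrightarrow> S \<alpha> \<beta> = 0) \<and>
     (\<forall>\<alpha> \<beta>. mdeg \<alpha> = mdeg \<beta> \<longrightarrow> S \<alpha> \<beta> = mident \<alpha> \<beta>)"

definition block_diagonal :: "('n::finite) smat \<Rightarrow> bool" where
  "block_diagonal H \<longleftrightarrow> (\<forall>\<alpha> \<beta>. mdeg \<alpha> \<noteq> mdeg \<beta> \<longrightarrow> H \<alpha> \<beta> = 0)"

definition spectral :: "'n \<Rightarrow> 'n smat" where
  "spectral a \<alpha> \<beta> = (if \<beta> = \<alpha> + Poly_Mapping.single a 1 then 1 else 0)"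

fun mpow :: "'n smat \<Rightarrow> nat \<Rightarrow> 'n smat" where
  "mpow A 0 = mident"
| "mpow A (Suc n) = mmult A (mpow A n)"

definition mat_monom :: "('n::{finite,linorder} \<Rightarrow> 'n smat) \<Rightarrow> 'n mi \<Rightarrow> 'n smat" where
  "mat_monom J \<alpha> = foldr (\<lambda>a M. mmult (mpow (J a) (Poly_Mapping.lookup \<alpha> a)) M) (sorted_list_of_set UNIV) mident"

definition mat_poly_eval :: "('n::{finite,linorder}) mpoly \<Rightarrow> ('n \<Rightarrow> 'n smat) \<Rightarrow> 'n smat" where
  "mat_poly_eval Q J i j = (\<Sum>\<alpha>\<in>Poly_Mapping.keys Q. Poly_Mapping.lookup Q \<alpha> * mat_monom J \<alpha> i j)"

definition jacobi :: "'n smat \<Rightarrow> 'n smat \<Rightarrow> 'n \<Rightarrow> 'n smat" where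
  "jacobi S Sinv a = mmult (mmult S (spectral a)) Sinv"

end

theory Submission
  imports Defs "Jordan_Normal_Form.Determinant"
begin

text \<open>
  Write \<open>Sc, Hc, Gc\<close> for the factors of the moment matrix of \<open>uc\<close> and let \<open>P = Q\<^sub>2(\<Lambda>)\<close>, the
  matrix shifting rows by the exponents of \<open>Q\<^sub>2\<close>. Since the Jacobi matrices are \<open>Sc \<Lambda>\<^sub>a Sc\<^sup>-\<^sup>1\<close>,
  \<open>Q\<^sub>2(J) = Sc P Sc\<^sup>-\<^sup>1\<close>; the relation \<open>Q\<^sub>2 uc = u\<close> says exactly \<open>P Gc = G\<close>; and
  \<open>Sc\<^sup>-\<^sup>1 Hc = Gc Sc\<^sup>T\<close>. Hence \<open>Q\<^sub>2(J) Hc = Sc G Sc\<^sup>T\<close>. Every factor other than \<open>Q\<^sub>2(J)\<close> is block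
  lower triangular, so the identity survives truncation to the first \<open>k\<close> blocks; as \<open>Sc\<close> is
  unitriangular and \<open>det G = det H\<close> on truncations, taking determinants gives
  \<open>det Q\<^sub>2(J) \<cdot> det Hc = det H\<close>, and quasi-definiteness makes the tau determinants nonzero.
\<close>

section \<open>Determinants on finite index sets\<close>

definition index_mat :: "(nat \<Rightarrow> 'a) \<Rightarrow> nat \<Rightarrow> ('a \<Rightarrow> 'a \<Rightarrow> complex) \<Rightarrow> complex mat" where
  "index_mat f n A = mat n n (\<lambda>(i,j). A (f i) (f j))"

lemma index_mat_carrier [simp]: "index_mat f n A \<in> carrier_mat n n"
  by (simp add: index_mat_def)

lemma det_on_eq_det_index_mat:
  assumes f: "bij_betw f {0..<n} I"
  shows "det_on I A = det (index_mat f n A)"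
proof -
  have inj: "inj_on f {0..<n}" by (rule bij_betw_imp_inj_on[OF f])
  have fI: "f ` {0..<n} = I" by (rule bij_betw_imp_surj_on[OF f])
  have gbij: "bij_betw (inv_into {0..<n} f) I {0..<n}" by (rule bij_betw_inv_into[OF f])
  have "det (index_mat f n A)
      = (\<Sum>p\<in>{p. p permutes {0..<n}}. of_int (sign p) * (\<Prod>i=0..<n. index_mat f n A $$ (i, p i)))"
    by (rule det_def'[OF index_mat_carrier])
  also have "\<dots> = (\<Sum>p\<in>{p. p permutes {0..<n}}. of_int (sign p) * (\<Prod>i=0..<n. A (f i) (f (p i))))"
    by (intro sum.cong refl arg_cong2[where f = "(*)"] prod.cong)
       (auto simp: index_mat_def permutes_in_image)
  also have "\<dots> = det_on I A"
    unfolding det_on_def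
  proof (rule sum.reindex_bij_witness[where i = "map_permutation I (inv_into {0..<n} f)"
        and j = "map_permutation {0..<n} f"])
    fix p assume "p \<in> {p. p permutes {0..<n}}"
    hence p: "p permutes {0..<n}" by simp
    show "map_permutation I (inv_into {0..<n} f) (map_permutation {0..<n} f p) = p"
      by (rule map_permutation_compose_inv[OF f p], rule inv_into_f_f[OF inj])
    show "map_permutation {0..<n} f p \<in> {p. p permutes I}"
      using map_permutation_permutes[OF f p] by simp
    have "(\<Prod>x\<in>I. A x (map_permutation {0..<n} f p x))
        = (\<Prod>i\<in>{0..<n}. A (f i) (map_permutation {0..<n} f p (f i)))"
      by (rule prod.reindex_bij_betw[OF f, symmetric])
    also have "\<dots> = (\<Prod>i=0..<n. A (f i) (f (p i)))"
      by (intro prod.cong refl) (simp only: map_permutation_apply[OF inj])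
    finally have "(\<Prod>x\<in>I. A x (map_permutation {0..<n} f p x)) = (\<Prod>i=0..<n. A (f i) (f (p i)))" .
    moreover have "sign (map_permutation {0..<n} f p) = sign p"
      by (rule sign_map_permutation[OF inj p]) simp
    ultimately show "of_int (sign (map_permutation {0..<n} f p)) * (\<Prod>x\<in>I. A x (map_permutation {0..<n} f p x))
       = of_int (sign p) * (\<Prod>i=0..<n. A (f i) (f (p i)))"
      by simp
  next
    fix q assume "q \<in> {p. p permutes I}"
    hence q: "q permutes I" by simp
    show "map_permutation {0..<n} f (map_permutation I (inv_into {0..<n} f) q) = q"
      by (rule map_permutation_compose_inv[OF gbij q], rule f_inv_into_f, simp add: fI)
    show "map_permutation I (inv_into {0..<n} f) q \<in> {p. p permutes {0..<n}}"
      using map_permutation_permutes[OF gbij q] by simp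
  qed
  finally show ?thesis by simp
qed

lemma det_on_cong:
  assumes "\<And>i j. i \<in> I \<Longrightarrow> j \<in> I \<Longrightarrow> A i j = B i j"
  shows "det_on I A = det_on I B"
  unfolding det_on_def using assms
  by (intro sum.cong refl arg_cong2[where f = "(*)"] prod.cong) (auto simp: permutes_in_image)

lemma det_on_transpose:
  assumes "finite I"
  shows "det_on I (\<lambda>i j. A j i) = det_on I A"
proof -
  obtain f where f: "bij_betw f {0..<card I} I" using ex_bij_betw_nat_finite[OF assms] by blast
  have "index_mat f (card I) (\<lambda>i j. A j i) = transpose_mat (index_mat f (card I) A)"
    unfolding index_mat_def by (intro eq_matI) auto
  then show ?thesis
    by (simp add: det_on_eq_det_index_mat[OF f] det_transpose[OF index_mat_carrier])
qed

lemma det_on_mult: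
  assumes "finite I"
  shows "det_on I (\<lambda>i j. \<Sum>l\<in>I. A i l * B l j) = det_on I A * det_on I B"
proof -
  obtain f where f: "bij_betw f {0..<card I} I" using ex_bij_betw_nat_finite[OF assms] by blast
  have prod: "index_mat f (card I) (\<lambda>i j. \<Sum>l\<in>I. A i l * B l j)
      = index_mat f (card I) A * index_mat f (card I) B"
  proof (rule eq_matI)
    fix i j assume "i < dim_row (index_mat f (card I) A * index_mat f (card I) B)"
      "j < dim_col (index_mat f (card I) A * index_mat f (card I) B)"
    then have ij: "i < card I" "j < card I" by (simp_all add: index_mat_def)
    have "(index_mat f (card I) A * index_mat f (card I) B) $$ (i, j)
        = (\<Sum>l\<in>{0..<card I}. A (f i) (f l) * B (f l) (f j))"
      using ij by (simp add: index_mat_def scalar_prod_def)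
    also have "\<dots> = (\<Sum>l\<in>I. A (f i) l * B l (f j))"
      by (rule sum.reindex_bij_betw[OF f])
    also have "\<dots> = index_mat f (card I) (\<lambda>i j. \<Sum>l\<in>I. A i l * B l j) $$ (i, j)"
      using ij by (simp add: index_mat_def)
    finally show "index_mat f (card I) (\<lambda>i j. \<Sum>l\<in>I. A i l * B l j) $$ (i, j)
        = (index_mat f (card I) A * index_mat f (card I) B) $$ (i, j)"
      by (rule sym)
  qed (simp_all add: index_mat_def)
  have "det_on I (\<lambda>i j. \<Sum>l\<in>I. A i l * B l j) = det (index_mat f (card I) A * index_mat f (card I) B)"
    by (simp only: det_on_eq_det_index_mat[OF f] prod)
  also have "\<dots> = det (index_mat f (card I) A) * det (index_mat f (card I) B)"
    by (rule det_mult[OF index_mat_carrier index_mat_carrier])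
  also have "\<dots> = det_on I A * det_on I B"
    by (simp only: det_on_eq_det_index_mat[OF f])
  finally show ?thesis .
qed

lemma det_on_mident:
  assumes "finite I"
  shows "det_on I mident = 1"
proof -
  obtain f where f: "bij_betw f {0..<card I} I" using ex_bij_betw_nat_finite[OF assms] by blast
  have "index_mat f (card I) mident = 1\<^sub>m (card I)"
  proof (rule eq_matI)
    fix i j assume "i < dim_row (1\<^sub>m (card I))" "j < dim_col (1\<^sub>m (card I))"
    then show "index_mat f (card I) mident $$ (i, j) = 1\<^sub>m (card I) $$ (i, j)"
      using inj_onD[OF bij_betw_imp_inj_on[OF f], of i j] by (simp add: index_mat_def mident_def)
  qed (simp_all add: index_mat_def)
  then show ?thesis by (simp add: det_on_eq_det_index_mat[OF f])
qed

lemma det_on_empty: "det_on {} A = 1"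
  unfolding det_on_def by (simp add: permutes_empty)

lemma det_on_Un_block_triangular:
  assumes fA: "finite A" and fB: "finite B" and disj: "A \<inter> B = {}"
    and upper_zero: "\<And>i j. i \<in> A \<Longrightarrow> j \<in> B \<Longrightarrow> M i j = 0"
  shows "det_on (A \<union> B) M = det_on A M * det_on B M"
proof -
  define a where "a = card A"
  define b where "b = card B"
  obtain fa where fa: "bij_betw fa {0..<a} A" using ex_bij_betw_nat_finite[OF fA] a_def by blast
  obtain fb where fb: "bij_betw fb {0..<b} B" using ex_bij_betw_nat_finite[OF fB] b_def by blast
  define f where "f = (\<lambda>i. if i < a then fa i else fb (i - a))"
  have shift: "bij_betw (\<lambda>i. i - a) {a..<a+b} {0..<b}"
    by (rule bij_betwI[where g = "\<lambda>i. i + a"]) auto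
  have "bij_betw f {0..<a} A"
    using fa by (rule bij_betw_cong[THEN iffD1, rotated]) (simp add: f_def)
  moreover have "bij_betw f {a..<a+b} B"
    using bij_betw_trans[OF shift fb] by (rule bij_betw_cong[THEN iffD1, rotated]) (simp add: f_def)
  ultimately have "bij_betw f ({0..<a} \<union> {a..<a+b}) (A \<union> B)"
    using disj by (rule bij_betw_combine)
  moreover have "{0..<a} \<union> {a..<a+b} = {0..<a+b}" by auto
  ultimately have f: "bij_betw f {0..<a+b} (A \<union> B)" by simp
  have "index_mat f (a+b) M
      = four_block_mat (index_mat fa a M) (0\<^sub>m a b) (mat b a (\<lambda>(i,j). M (fb i) (fa j))) (index_mat fb b M)"
    (is "_ = ?B")
  proof (rule eq_matI)
    fix i j assume "i < dim_row ?B" "j < dim_col ?B"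
    then have ij: "i < a + b" "j < a + b" by (auto simp: index_mat_def)
    have "i < a \<Longrightarrow> \<not> j < a \<Longrightarrow> M (fa i) (fb (j - a)) = 0"
      using ij bij_betwE[OF fa] bij_betwE[OF fb] upper_zero by auto
    with ij show "index_mat f (a+b) M $$ (i,j) = ?B $$ (i,j)"
      by (auto simp: index_mat_def f_def)
  qed (auto simp: index_mat_def)
  then have "det (index_mat f (a+b) M) = det (index_mat fa a M) * det (index_mat fb b M)"
    by (simp add: det_four_block_mat_upper_right_zero[of _ a _ b])
  then show ?thesis
    by (simp only: det_on_eq_det_index_mat[OF f] det_on_eq_det_index_mat[OF fa]
        det_on_eq_det_index_mat[OF fb])
qed

section \<open>Block lower triangular matrices and truncation\<close>

lemma lookup_le_mdeg: "Poly_Mapping.lookup \<beta> a \<le> mdeg (\<beta> :: ('n::finite) mi)"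
  unfolding mdeg_def by (rule member_le_sum) auto

lemma finite_mdeg_le: "finite {\<beta> :: ('n::finite) mi. mdeg \<beta> \<le> d}"
proof -
  have "Poly_Mapping.lookup ` {\<beta> :: 'n mi. mdeg \<beta> \<le> d} \<subseteq> PiE UNIV (\<lambda>_. {..d})"
    using lookup_le_mdeg order_trans by (fastforce simp: PiE_iff)
  then have "finite (Poly_Mapping.lookup ` {\<beta> :: 'n mi. mdeg \<beta> \<le> d})"
    by (rule finite_subset) (intro finite_PiE; simp)
  moreover have "inj_on Poly_Mapping.lookup {\<beta> :: 'n mi. mdeg \<beta> \<le> d}"
    by (rule inj_onI) (rule poly_mapping_eqI, simp)
  ultimately show ?thesis by (rule finite_imageD)
qed

lemma finite_trunc_idx [simp]: "finite (trunc_idx k :: ('n::finite) mi set)"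
  unfolding trunc_idx_def by (rule finite_subset[OF _ finite_mdeg_le[of k]]) auto

lemma finite_block_idx [simp]: "finite (block_idx k :: ('n::finite) mi set)"
  unfolding block_idx_def by (rule finite_subset[OF _ finite_mdeg_le[of k]]) auto

definition block_lower_triangular :: "('n::finite) smat \<Rightarrow> bool" where
  "block_lower_triangular A \<longleftrightarrow> (\<forall>\<alpha> \<beta>. mdeg \<alpha> < mdeg \<beta> \<longrightarrow> A \<alpha> \<beta> = 0)"

lemma block_lower_unitriangular_imp_triangular:
  "block_lower_unitriangular A \<Longrightarrow> block_lower_triangular A"
  by (simp add: block_lower_unitriangular_def block_lower_triangular_def)

lemma block_diagonal_imp_lower_triangular:
  "block_diagonal A \<Longrightarrow> block_lower_triangular A"
  by (simp add: block_diagonal_def block_lower_triangular_def)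

lemma block_lower_triangular_row_in_trunc_idx:
  assumes "block_lower_triangular A" "i \<in> trunc_idx k" "A i l \<noteq> 0"
  shows "l \<in> trunc_idx k"
proof -
  have "\<not> mdeg i < mdeg l"
    using assms(1,3) unfolding block_lower_triangular_def by blast
  then show ?thesis using assms(2) by (simp add: trunc_idx_def)
qed

lemma det_on_trunc_idx_block_lower_triangular:
  fixes A :: "('n::finite) smat"
  assumes "block_lower_triangular A"
  shows "det_on (trunc_idx k) A = (\<Prod>l<k. det_on (block_idx l) A)"
proof (induction k)
  case 0
  have "trunc_idx 0 = ({} :: 'n mi set)" by (simp add: trunc_idx_def)
  then show ?case by (simp add: det_on_empty)
next
  case (Suc k)
  have "trunc_idx (Suc k) = (trunc_idx k \<union> block_idx k :: 'n mi set)"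
    by (auto simp: trunc_idx_def block_idx_def)
  moreover have "det_on (trunc_idx k \<union> block_idx k) A = det_on (trunc_idx k) A * det_on (block_idx k) A"
    using assms
    by (intro det_on_Un_block_triangular finite_trunc_idx finite_block_idx)
       (auto simp: trunc_idx_def block_idx_def block_lower_triangular_def)
  ultimately show ?case using Suc by simp
qed

lemma det_on_trunc_idx_unitriangular:
  fixes A :: "('n::finite) smat"
  assumes "block_lower_unitriangular A"
  shows "det_on (trunc_idx k) A = 1"
proof -
  have "det_on (block_idx l) A = det_on (block_idx l) (mident :: 'n smat)" for l
    by (rule det_on_cong) (use assms in \<open>auto simp: block_lower_unitriangular_def block_idx_def\<close>)
  then have "det_on (block_idx l) A = 1" for l
    by (simp add: det_on_mident)
  then show ?thesis
    by (simp add: det_on_trunc_idx_block_lower_triangular[OF block_lower_unitriangular_imp_triangular[OF assms]])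
qed

lemma det_on_trunc_idx_sandwich:
  fixes A G :: "('n::finite) smat"
  assumes "block_lower_unitriangular A"
  shows "det_on (trunc_idx k) (\<lambda>i j. \<Sum>\<gamma>\<in>trunc_idx k. A i \<gamma> * (\<Sum>\<delta>\<in>trunc_idx k. G \<gamma> \<delta> * A j \<delta>))
       = det_on (trunc_idx k) G"
proof -
  have "det_on (trunc_idx k) (\<lambda>i j. \<Sum>\<gamma>\<in>trunc_idx k. A i \<gamma> * (\<Sum>\<delta>\<in>trunc_idx k. G \<gamma> \<delta> * A j \<delta>))
      = det_on (trunc_idx k) A * (det_on (trunc_idx k) G * det_on (trunc_idx k) (\<lambda>\<delta> j. A j \<delta>))"
    by (simp only: det_on_mult[OF finite_trunc_idx])
  also have "det_on (trunc_idx k) (\<lambda>\<delta> j. A j \<delta>) = 1"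
    using det_on_transpose[OF finite_trunc_idx[of k], of A] det_on_trunc_idx_unitriangular[OF assms]
    by (simp only:)
  finally show ?thesis
    by (simp add: det_on_trunc_idx_unitriangular[OF assms])
qed

section \<open>Row-finite semi-infinite matrices\<close>

text \<open>\<open>mmult\<close> sums over the support of a row of the left factor; on an infinite support this
  sum is \<open>0\<close> by convention, so the usual matrix algebra needs row-finite left factors.\<close>

definition row_finite :: "'n smat \<Rightarrow> bool" where
  "row_finite A \<longleftrightarrow> (\<forall>i. finite {l. A i l \<noteq> 0})"

lemma block_lower_triangular_row_finite:
  assumes "block_lower_triangular A"
  shows "row_finite A"
  unfolding row_finite_def
proof
  fix i
  have "{l. A i l \<noteq> 0} \<subseteq> trunc_idx (Suc (mdeg i))"
    using block_lower_triangular_row_in_trunc_idx[OF assms, of i "Suc (mdeg i)"]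
    by (auto simp: trunc_idx_def)
  then show "finite {l. A i l \<noteq> 0}" by (rule finite_subset) simp
qed

lemma mmult_eq_sum:
  assumes "finite F" "{l. A i l \<noteq> 0} \<subseteq> F"
  shows "mmult A B i j = (\<Sum>l\<in>F. A i l * B l j)"
  unfolding mmult_def by (rule sum.mono_neutral_left) (use assms in auto)

lemma mmult_eq_sum_on:
  assumes "row_finite A" "finite I" "\<And>l. l \<notin> I \<Longrightarrow> A i l * B l j = 0"
  shows "mmult A B i j = (\<Sum>l\<in>I. A i l * B l j)"
proof -
  have "mmult A B i j = (\<Sum>l\<in>{l. A i l \<noteq> 0} \<union> I. A i l * B l j)"
    using assms(1,2) by (intro mmult_eq_sum) (auto simp: row_finite_def)
  also have "\<dots> = (\<Sum>l\<in>I. A i l * B l j)"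
    using assms by (intro sum.mono_neutral_right) (auto simp: row_finite_def)
  finally show ?thesis .
qed

lemma row_finite_mmult:
  assumes "row_finite A" "row_finite B"
  shows "row_finite (mmult A B)"
  unfolding row_finite_def
proof
  fix i
  have "{m. mmult A B i m \<noteq> 0} \<subseteq> (\<Union>l\<in>{l. A i l \<noteq> 0}. {m. B l m \<noteq> 0})"
  proof
    fix m assume "m \<in> {m. mmult A B i m \<noteq> 0}"
    then have "(\<Sum>l\<in>{l. A i l \<noteq> 0}. A i l * B l m) \<noteq> 0" by (simp add: mmult_def)
    then obtain l where "A i l * B l m \<noteq> 0" by (meson sum.not_neutral_contains_not_neutral)
    then show "m \<in> (\<Union>l\<in>{l. A i l \<noteq> 0}. {m. B l m \<noteq> 0})" by auto
  qed
  moreover have "finite (\<Union>l\<in>{l. A i l \<noteq> 0}. {m. B l m \<noteq> 0})"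
    using assms unfolding row_finite_def by auto
  ultimately show "finite {m. mmult A B i m \<noteq> 0}" by (rule finite_subset)
qed

lemma mmult_assoc:
  assumes A: "row_finite A" and B: "row_finite B"
  shows "mmult (mmult A B) C = mmult A (mmult B C)"
proof (intro ext)
  fix i j
  define SA where "SA = {l. A i l \<noteq> 0}"
  define F where "F = (\<Union>l\<in>SA. {m. B l m \<noteq> 0})"
  have fF: "finite F"
    using A B by (auto simp: row_finite_def F_def SA_def)
  have "{m. mmult A B i m \<noteq> 0} \<subseteq> F"
  proof
    fix m assume "m \<in> {m. mmult A B i m \<noteq> 0}"
    then have "(\<Sum>l\<in>SA. A i l * B l m) \<noteq> 0" by (simp add: mmult_def SA_def)
    then obtain l where "l \<in> SA" "A i l * B l m \<noteq> 0" by (meson sum.not_neutral_contains_not_neutral)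
    then show "m \<in> F" by (auto simp: F_def)
  qed
  then have "mmult (mmult A B) C i j = (\<Sum>m\<in>F. \<Sum>l\<in>SA. A i l * B l m * C m j)"
    by (simp add: mmult_eq_sum[OF fF]) (simp add: mmult_def SA_def sum_distrib_right)
  also have "\<dots> = (\<Sum>l\<in>SA. \<Sum>m\<in>F. A i l * B l m * C m j)"
    by (rule sum.swap)
  also have "\<dots> = (\<Sum>l\<in>SA. A i l * (\<Sum>m\<in>F. B l m * C m j))"
    by (simp add: sum_distrib_left mult.assoc)
  also have "\<dots> = mmult A (mmult B C) i j"
    unfolding mmult_def[of A] SA_def[symmetric]
    by (intro sum.cong refl arg_cong2[where f = "(*)"] mmult_eq_sum[symmetric, OF fF])
       (auto simp: F_def)
  finally show "mmult (mmult A B) C i j = mmult A (mmult B C) i j" .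
qed

lemma mmult_mident_left [simp]: "mmult mident A = (A :: 'n smat)"
proof (intro ext)
  fix i j :: "'n mi"
  have "{l. mident i l \<noteq> (0::complex)} = {i}" by (auto simp: mident_def)
  then show "mmult mident A i j = A i j" by (simp add: mmult_def mident_def)
qed

lemma mmult_mident_right:
  assumes "row_finite A"
  shows "mmult A mident = A"
proof (intro ext)
  fix i j
  have "mmult A mident i j = (\<Sum>l\<in>{j}. A i l * mident l j)"
    using assms by (intro mmult_eq_sum_on) (auto simp: mident_def)
  then show "mmult A mident i j = A i j" by (simp add: mident_def)
qed

lemma row_finite_mident [simp]: "row_finite (mident :: 'n smat)"
proof -
  have "{l. mident i l \<noteq> (0::complex)} = {i}" for i :: "'n mi" by (auto simp: mident_def)
  then show ?thesis unfolding row_finite_def by simp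
qed

lemma block_lower_triangular_mmult:
  assumes "block_lower_triangular A" "block_lower_triangular B"
  shows "block_lower_triangular (mmult A B)"
  using assms unfolding block_lower_triangular_def mmult_def
  by (auto intro!: sum.neutral) (meson le_less_trans not_less)

lemma mtrans_mmult_mtrans:
  assumes A: "row_finite A" and B: "row_finite B"
  shows "mtrans (mmult A (mtrans B)) = mmult B (mtrans A)"
proof (intro ext)
  fix i j
  define F where "F = {l. A j l \<noteq> 0} \<union> {l. B i l \<noteq> 0}"
  have "finite F" using assms by (simp add: F_def row_finite_def)
  then have "mmult A (mtrans B) j i = (\<Sum>l\<in>F. A j l * B i l)"
    and "mmult B (mtrans A) i j = (\<Sum>l\<in>F. B i l * A j l)"
    by (auto simp: mmult_eq_sum[of F] F_def mtrans_def)
  then show "mtrans (mmult A (mtrans B)) i j = mmult B (mtrans A) i j"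
    by (simp add: mtrans_def mult.commute)
qed

lemma mmult_lincomb_right:
  "mmult A (\<lambda>\<gamma> j. \<Sum>\<alpha>\<in>K. c \<alpha> * X \<alpha> \<gamma> j) i j = (\<Sum>\<alpha>\<in>K. c \<alpha> * mmult A (X \<alpha>) i j)"
proof -
  have "mmult A (\<lambda>\<gamma> j. \<Sum>\<alpha>\<in>K. c \<alpha> * X \<alpha> \<gamma> j) i j
      = (\<Sum>l\<in>{l. A i l \<noteq> 0}. \<Sum>\<alpha>\<in>K. c \<alpha> * (A i l * X \<alpha> l j))"
    unfolding mmult_def by (simp add: sum_distrib_left ac_simps)
  also have "\<dots> = (\<Sum>\<alpha>\<in>K. \<Sum>l\<in>{l. A i l \<noteq> 0}. c \<alpha> * (A i l * X \<alpha> l j))"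
    by (rule sum.swap)
  also have "\<dots> = (\<Sum>\<alpha>\<in>K. c \<alpha> * mmult A (X \<alpha>) i j)"
    unfolding mmult_def by (simp add: sum_distrib_left)
  finally show ?thesis .
qed

section \<open>Conjugation\<close>

lemma row_finite_mpow: "row_finite A \<Longrightarrow> row_finite (mpow A n)"
  by (induction n) (auto intro: row_finite_mmult)

definition conj_mat :: "'n smat \<Rightarrow> 'n smat \<Rightarrow> 'n smat \<Rightarrow> 'n smat" where
  "conj_mat S Sinv X = mmult (mmult S X) Sinv"

locale invertible_row_finite =
  fixes S Sinv :: "('n::{finite,linorder}) smat"
  assumes row_finite_S: "row_finite S" and row_finite_Sinv: "row_finite Sinv"
    and right_inverse: "mmult S Sinv = mident" and left_inverse: "mmult Sinv S = mident"
begin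

lemma conj_mat_mult:
  assumes A: "row_finite A" and B: "row_finite B"
  shows "mmult (conj_mat S Sinv A) (conj_mat S Sinv B) = conj_mat S Sinv (mmult A B)"
proof -
  have SA: "row_finite (mmult S A)" and SB: "row_finite (mmult S B)"
    using row_finite_S A B by (auto intro: row_finite_mmult)
  have "mmult Sinv (mmult S B) = B"
    by (simp add: mmult_assoc[OF row_finite_Sinv row_finite_S, symmetric] left_inverse)
  then have "mmult Sinv (mmult (mmult S B) Sinv) = mmult B Sinv"
    by (simp add: mmult_assoc[OF row_finite_Sinv SB, symmetric])
  moreover have "mmult (conj_mat S Sinv A) (conj_mat S Sinv B)
      = mmult (mmult S A) (mmult Sinv (mmult (mmult S B) Sinv))"
    unfolding conj_mat_def by (rule mmult_assoc[OF SA row_finite_Sinv])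
  moreover have "mmult (mmult S A) (mmult B Sinv) = mmult (mmult (mmult S A) B) Sinv"
    by (rule mmult_assoc[OF SA B, symmetric])
  moreover have "mmult (mmult S A) B = mmult S (mmult A B)"
    by (rule mmult_assoc[OF row_finite_S A])
  ultimately show ?thesis by (simp add: conj_mat_def)
qed

lemma conj_mat_mident: "conj_mat S Sinv mident = mident"
  unfolding conj_mat_def by (simp add: mmult_mident_right row_finite_S right_inverse)

lemma conj_mat_mpow:
  assumes "row_finite A"
  shows "mpow (conj_mat S Sinv A) n = conj_mat S Sinv (mpow A n)"
  by (induction n) (simp_all add: conj_mat_mident conj_mat_mult assms row_finite_mpow)

text \<open>The row-finiteness conjunct is what makes the induction go through.\<close>

lemma conj_mat_foldr:
  assumes "\<And>a. row_finite (L a)"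
  shows "foldr (\<lambda>a M. mmult (mpow (conj_mat S Sinv (L a)) (n a)) M) as mident
       = conj_mat S Sinv (foldr (\<lambda>a M. mmult (mpow (L a) (n a)) M) as mident)
     \<and> row_finite (foldr (\<lambda>a M. mmult (mpow (L a) (n a)) M) as mident)"
  by (induction as)
     (simp_all add: conj_mat_mident conj_mat_mpow conj_mat_mult assms row_finite_mpow row_finite_mmult)

lemma mat_monom_conj_mat:
  assumes "\<And>a. row_finite (L a)"
  shows "mat_monom (\<lambda>a. conj_mat S Sinv (L a)) \<alpha> = conj_mat S Sinv (mat_monom L \<alpha>)"
  unfolding mat_monom_def
  using conj_mat_foldr[where L = L and n = "Poly_Mapping.lookup \<alpha>"] assms by blast

end

section \<open>Polynomials in the spectral matrices\<close>

definition shift_mat :: "'n mi \<Rightarrow> 'n smat" where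
  "shift_mat \<alpha> \<gamma> \<epsilon> = (if \<epsilon> = \<gamma> + \<alpha> then 1 else 0)"

lemma row_finite_shift_mat [simp]: "row_finite (shift_mat \<alpha>)"
proof -
  have "{l. shift_mat \<alpha> \<gamma> l \<noteq> 0} = {\<gamma> + \<alpha>}" for \<gamma> by (auto simp: shift_mat_def)
  then show ?thesis by (simp add: row_finite_def)
qed

lemma mmult_shift_mat: "mmult (shift_mat \<alpha>) B \<gamma> j = B (\<gamma> + \<alpha>) j"
proof -
  have "{l. shift_mat \<alpha> \<gamma> l \<noteq> 0} = {\<gamma> + \<alpha>}" by (auto simp: shift_mat_def)
  then show ?thesis by (simp add: mmult_def shift_mat_def)
qed

lemma shift_mat_add: "mmult (shift_mat \<alpha>) (shift_mat \<beta>) = shift_mat (\<alpha> + \<beta>)"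
  by (intro ext) (simp add: mmult_shift_mat shift_mat_def add.assoc)

lemma shift_mat_0: "shift_mat 0 = mident"
  by (intro ext) (auto simp: shift_mat_def mident_def)

lemma spectral_eq_shift_mat: "spectral a = shift_mat (Poly_Mapping.single a 1)"
  by (intro ext) (simp add: spectral_def shift_mat_def)

lemma row_finite_spectral: "row_finite (spectral a)"
  by (simp add: spectral_eq_shift_mat)

lemma mpow_spectral: "mpow (spectral a) n = shift_mat (Poly_Mapping.single a n)"
  by (induction n) (simp_all add: shift_mat_0 spectral_eq_shift_mat shift_mat_add flip: single_add)

lemma mat_monom_spectral: "mat_monom spectral (\<alpha> :: ('n::{finite,linorder}) mi) = shift_mat \<alpha>"
proof -
  have "foldr (\<lambda>a M. mmult (mpow (spectral a) (Poly_Mapping.lookup \<alpha> a)) M) as mident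
      = shift_mat (sum_list (map (\<lambda>a. Poly_Mapping.single a (Poly_Mapping.lookup \<alpha> a)) as))" for as
    by (induction as) (simp_all add: shift_mat_0 mpow_spectral shift_mat_add)
  moreover have "sum_list (map (\<lambda>a. Poly_Mapping.single a (Poly_Mapping.lookup \<alpha> a)) (sorted_list_of_set UNIV))
      = (\<Sum>a\<in>UNIV. Poly_Mapping.single a (Poly_Mapping.lookup \<alpha> a))"
    by (subst sum_list_distinct_conv_sum_set) auto
  moreover have "(\<Sum>a\<in>UNIV. Poly_Mapping.single a (Poly_Mapping.lookup \<alpha> a)) = \<alpha>"
    by (rule poly_mapping_eqI) (simp add: lookup_sum lookup_single when_def)
  ultimately show ?thesis unfolding mat_monom_def by simp
qed

lemma mat_poly_eval_spectral:
  "mat_poly_eval Q spectral \<gamma> \<epsilon> = (\<Sum>\<alpha>\<in>Poly_Mapping.keys Q. Poly_Mapping.lookup Q \<alpha> * shift_mat \<alpha> \<gamma> \<epsilon>)"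
  by (simp add: mat_poly_eval_def mat_monom_spectral)

lemma mat_poly_eval_spectral_row:
  "{\<epsilon>. mat_poly_eval Q spectral \<gamma> \<epsilon> \<noteq> 0} \<subseteq> (\<lambda>\<alpha>. \<gamma> + \<alpha>) ` Poly_Mapping.keys Q"
proof
  fix \<epsilon> assume "\<epsilon> \<in> {\<epsilon>. mat_poly_eval Q spectral \<gamma> \<epsilon> \<noteq> 0}"
  then have "(\<Sum>\<alpha>\<in>Poly_Mapping.keys Q. Poly_Mapping.lookup Q \<alpha> * shift_mat \<alpha> \<gamma> \<epsilon>) \<noteq> 0"
    by (simp add: mat_poly_eval_spectral)
  then obtain \<alpha> where "\<alpha> \<in> Poly_Mapping.keys Q" "Poly_Mapping.lookup Q \<alpha> * shift_mat \<alpha> \<gamma> \<epsilon> \<noteq> 0"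
    by (rule sum.not_neutral_contains_not_neutral)
  then show "\<epsilon> \<in> (\<lambda>\<alpha>. \<gamma> + \<alpha>) ` Poly_Mapping.keys Q"
    by (auto simp: shift_mat_def split: if_splits)
qed

lemma row_finite_mat_poly_eval_spectral: "row_finite (mat_poly_eval Q spectral)"
  unfolding row_finite_def
  by (intro allI finite_subset[OF mat_poly_eval_spectral_row]) simp

lemma mmult_mat_poly_eval_spectral:
  "mmult (mat_poly_eval Q spectral) B \<gamma> j
     = (\<Sum>\<alpha>\<in>Poly_Mapping.keys Q. Poly_Mapping.lookup Q \<alpha> * B (\<gamma> + \<alpha>) j)"
proof -
  let ?F = "(\<lambda>\<alpha>. \<gamma> + \<alpha>) ` Poly_Mapping.keys Q"
  have "mmult (mat_poly_eval Q spectral) B \<gamma> j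
      = (\<Sum>\<epsilon>\<in>?F. \<Sum>\<alpha>\<in>Poly_Mapping.keys Q. Poly_Mapping.lookup Q \<alpha> * (shift_mat \<alpha> \<gamma> \<epsilon> * B \<epsilon> j))"
    by (simp add: mmult_eq_sum[OF _ mat_poly_eval_spectral_row] mat_poly_eval_spectral
        sum_distrib_right mult.assoc)
  also have "\<dots> = (\<Sum>\<alpha>\<in>Poly_Mapping.keys Q. \<Sum>\<epsilon>\<in>?F. Poly_Mapping.lookup Q \<alpha> * (shift_mat \<alpha> \<gamma> \<epsilon> * B \<epsilon> j))"
    by (rule sum.swap)
  also have "\<dots> = (\<Sum>\<alpha>\<in>Poly_Mapping.keys Q. Poly_Mapping.lookup Q \<alpha> * B (\<gamma> + \<alpha>) j)"
  proof (intro sum.cong refl)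
    fix \<alpha> assume "\<alpha> \<in> Poly_Mapping.keys Q"
    then have "\<gamma> + \<alpha> \<in> ?F" by simp
    have "(\<Sum>\<epsilon>\<in>?F. Poly_Mapping.lookup Q \<alpha> * (shift_mat \<alpha> \<gamma> \<epsilon> * B \<epsilon> j))
        = (\<Sum>\<epsilon>\<in>?F. if \<epsilon> = \<gamma> + \<alpha> then Poly_Mapping.lookup Q \<alpha> * B \<epsilon> j else 0)"
      by (intro sum.cong refl) (simp add: shift_mat_def)
    with \<open>\<gamma> + \<alpha> \<in> ?F\<close>
    show "(\<Sum>\<epsilon>\<in>?F. Poly_Mapping.lookup Q \<alpha> * (shift_mat \<alpha> \<gamma> \<epsilon> * B \<epsilon> j))
        = Poly_Mapping.lookup Q \<alpha> * B (\<gamma> + \<alpha>) j"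
      by simp
  qed
  finally show ?thesis .
qed

lemma jacobi_eq_conj_mat: "jacobi S Sinv = (\<lambda>a. conj_mat S Sinv (spectral a))"
  by (rule ext) (simp add: jacobi_def conj_mat_def)

lemma (in invertible_row_finite) mat_poly_eval_jacobi:
  "mat_poly_eval Q (jacobi S Sinv) = mmult S (mmult (mat_poly_eval Q spectral) Sinv)"
proof (intro ext)
  fix i j
  have "mat_monom (jacobi S Sinv) \<alpha> = mmult S (mmult (shift_mat \<alpha>) Sinv)" for \<alpha>
  proof -
    have "mat_monom (jacobi S Sinv) \<alpha> = conj_mat S Sinv (mat_monom spectral \<alpha>)"
      by (simp only: jacobi_eq_conj_mat mat_monom_conj_mat[OF row_finite_spectral])
    then show ?thesis
      by (simp add: mat_monom_spectral conj_mat_def mmult_assoc[OF row_finite_S row_finite_shift_mat])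
  qed
  then have "mat_poly_eval Q (jacobi S Sinv) i j
      = mmult S (\<lambda>\<gamma> j. \<Sum>\<alpha>\<in>Poly_Mapping.keys Q. Poly_Mapping.lookup Q \<alpha> * mmult (shift_mat \<alpha>) Sinv \<gamma> j) i j"
    by (simp add: mat_poly_eval_def mmult_lincomb_right)
  also have "(\<lambda>\<gamma> j. \<Sum>\<alpha>\<in>Poly_Mapping.keys Q. Poly_Mapping.lookup Q \<alpha> * mmult (shift_mat \<alpha>) Sinv \<gamma> j)
      = mmult (mat_poly_eval Q spectral) Sinv"
    by (intro ext) (simp add: mmult_shift_mat mmult_mat_poly_eval_spectral)
  finally show "mat_poly_eval Q (jacobi S Sinv) i j = mmult S (mmult (mat_poly_eval Q spectral) Sinv) i j" .
qed

section \<open>Moment matrices\<close>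

lemma lin_functional_zero: "lin_functional u \<Longrightarrow> u 0 = 0"
  unfolding lin_functional_def by (metis add_cancel_right_right add_0)

lemma lin_functional_sum: "lin_functional u \<Longrightarrow> u (\<Sum>x\<in>A. f x) = (\<Sum>x\<in>A. u (f x))"
  by (induction A rule: infinite_finite_induct) (auto simp: lin_functional_zero lin_functional_def)

lemma moment_matrix_modification:
  assumes lin: "lin_functional uc" and modif: "\<forall>P. uc (Q * P) = u P"
  shows "mmult (mat_poly_eval Q spectral) (moment_matrix uc) = moment_matrix u"
proof (intro ext)
  fix \<gamma> \<delta>
  let ?R = "\<Sum>\<alpha>\<in>Poly_Mapping.keys Q. cscale (Poly_Mapping.lookup Q \<alpha>) (monomial (\<gamma> + \<alpha>) * monomial \<delta>)"
  have "?R = (\<Sum>\<alpha>\<in>Poly_Mapping.keys Q. Poly_Mapping.single \<alpha> (Poly_Mapping.lookup Q \<alpha>))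
      * (monomial \<gamma> * monomial \<delta>)"
    unfolding sum_distrib_right
    by (intro sum.cong refl) (simp add: cscale_def monomial_def mult_single ac_simps)
  also have "(\<Sum>\<alpha>\<in>Poly_Mapping.keys Q. Poly_Mapping.single \<alpha> (Poly_Mapping.lookup Q \<alpha>)) = Q"
    by (rule poly_mapping_eqI) (auto simp: lookup_sum lookup_single when_def in_keys_iff)
  finally have "uc ?R = moment_matrix u \<gamma> \<delta>"
    using modif by (simp add: moment_matrix_def)
  moreover have "uc ?R = mmult (mat_poly_eval Q spectral) (moment_matrix uc) \<gamma> \<delta>"
    using lin
    by (simp add: lin_functional_sum mmult_mat_poly_eval_spectral moment_matrix_def lin_functional_def)
  ultimately show "mmult (mat_poly_eval Q spectral) (moment_matrix uc) \<gamma> \<delta> = moment_matrix u \<gamma> \<delta>"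
    by simp
qed

lemma mmult_mtrans_inverse_column:
  assumes A: "row_finite A" and B: "row_finite B" and X: "row_finite X" and inv: "mmult A B = mident"
    and F: "finite F" "{\<delta>. A j \<delta> \<noteq> 0} \<subseteq> F"
  shows "(\<Sum>\<delta>\<in>F. mmult X (mtrans B) \<beta> \<delta> * A j \<delta>) = X \<beta> j"
proof -
  have "(\<Sum>\<delta>\<in>F. mmult X (mtrans B) \<beta> \<delta> * A j \<delta>) = mmult A (mtrans (mmult X (mtrans B))) j \<beta>"
    by (simp add: mmult_eq_sum[where A = A and i = j, OF F] mtrans_def mult.commute)
  also have "mtrans (mmult X (mtrans B)) = mmult B (mtrans X)"
    by (rule mtrans_mmult_mtrans[OF X B])
  also have "mmult A (mmult B (mtrans X)) = mtrans X"
    by (simp add: mmult_assoc[OF A B, symmetric] inv)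
  finally show ?thesis by (simp only: mtrans_def[of X])
qed

text \<open>Entrywise form of \<open>Q(J) Hc = Sc G Sc\<^sup>T\<close> on the first \<open>k\<close> blocks; truncation is exact
  because \<open>Hc\<close> is block diagonal and \<open>Sc\<close> block lower triangular.\<close>

lemma mat_poly_eval_jacobi_mult_trunc:
  fixes u uc :: "('n::{finite,linorder}) mpoly \<Rightarrow> complex" and Sc Scinv Hc :: "'n smat"
  assumes lin_uc: "lin_functional uc" and modif: "\<forall>P. uc (Q * P) = u P"
    and Sc: "block_lower_unitriangular Sc" "block_lower_unitriangular Scinv"
           "mmult Sc Scinv = mident" "mmult Scinv Sc = mident"
    and Hc: "block_diagonal Hc"
    and Gc: "moment_matrix uc = mmult (mmult Scinv Hc) (mtrans Scinv)"
    and ij: "i \<in> trunc_idx k" "j \<in> trunc_idx k"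
  shows "(\<Sum>l\<in>trunc_idx k. mat_poly_eval Q (jacobi Sc Scinv) i l * Hc l j)
       = (\<Sum>\<gamma>\<in>trunc_idx k. Sc i \<gamma> * (\<Sum>\<delta>\<in>trunc_idx k. moment_matrix u \<gamma> \<delta> * Sc j \<delta>))"
proof -
  define P where "P = mat_poly_eval Q spectral"
  have lower: "block_lower_triangular Sc" "block_lower_triangular Scinv" "block_lower_triangular Hc"
    using Sc Hc by (simp_all add: block_lower_unitriangular_imp_triangular block_diagonal_imp_lower_triangular)
  then have rf: "row_finite Sc" "row_finite Scinv" "row_finite Hc"
    by (simp_all add: block_lower_triangular_row_finite)
  have rfP: "row_finite P" by (simp add: P_def row_finite_mat_poly_eval_spectral)
  interpret invertible_row_finite Sc Scinv
    using rf Sc by unfold_locales simp_all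
  have Scinv_Hc_col: "mmult Scinv Hc \<beta> j = (\<Sum>\<delta>\<in>trunc_idx k. moment_matrix uc \<beta> \<delta> * Sc j \<delta>)" for \<beta>
    unfolding Gc
    using block_lower_triangular_row_in_trunc_idx[OF lower(1) ij(2)]
    by (intro mmult_mtrans_inverse_column[symmetric] rf Sc(3) row_finite_mmult) auto
  have P_Scinv_Hc_col: "mmult P (mmult Scinv Hc) \<gamma> j = (\<Sum>\<delta>\<in>trunc_idx k. moment_matrix u \<gamma> \<delta> * Sc j \<delta>)" for \<gamma>
  proof -
    have "mmult P (mmult Scinv Hc) \<gamma> j
        = (\<Sum>\<alpha>\<in>Poly_Mapping.keys Q. \<Sum>\<delta>\<in>trunc_idx k.
             Poly_Mapping.lookup Q \<alpha> * moment_matrix uc (\<gamma> + \<alpha>) \<delta> * Sc j \<delta>)"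
      by (simp add: P_def mmult_mat_poly_eval_spectral Scinv_Hc_col sum_distrib_left mult.assoc)
    also have "\<dots> = (\<Sum>\<delta>\<in>trunc_idx k. \<Sum>\<alpha>\<in>Poly_Mapping.keys Q.
             Poly_Mapping.lookup Q \<alpha> * moment_matrix uc (\<gamma> + \<alpha>) \<delta> * Sc j \<delta>)"
      by (rule sum.swap)
    also have "\<dots> = (\<Sum>\<delta>\<in>trunc_idx k. mmult P (moment_matrix uc) \<gamma> \<delta> * Sc j \<delta>)"
      by (simp add: P_def mmult_mat_poly_eval_spectral sum_distrib_right)
    finally show ?thesis
      by (simp add: P_def moment_matrix_modification[OF lin_uc modif])
  qed
  have M: "mat_poly_eval Q (jacobi Sc Scinv) = mmult Sc (mmult P Scinv)"
    unfolding P_def by (rule mat_poly_eval_jacobi)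
  have "(\<Sum>l\<in>trunc_idx k. mat_poly_eval Q (jacobi Sc Scinv) i l * Hc l j)
      = mmult (mat_poly_eval Q (jacobi Sc Scinv)) Hc i j"
    unfolding M
    by (intro mmult_eq_sum_on[symmetric] row_finite_mmult rf rfP finite_trunc_idx)
       (use Hc ij(2) in \<open>auto simp: trunc_idx_def block_diagonal_def\<close>)
  also have "mmult (mat_poly_eval Q (jacobi Sc Scinv)) Hc = mmult Sc (mmult P (mmult Scinv Hc))"
    unfolding M by (simp add: mmult_assoc rf rfP row_finite_mmult)
  also have "mmult Sc (mmult P (mmult Scinv Hc)) i j
      = (\<Sum>\<gamma>\<in>trunc_idx k. Sc i \<gamma> * mmult P (mmult Scinv Hc) \<gamma> j)"
    by (intro mmult_eq_sum_on rf(1) finite_trunc_idx)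
       (use block_lower_triangular_row_in_trunc_idx[OF lower(1) ij(1)] in auto)
  finally show ?thesis by (simp add: P_Scinv_Hc_col)
qed

lemma det_on_trunc_idx_congruence:
  fixes A H :: "('n::finite) smat"
  assumes A: "block_lower_unitriangular A" and H: "block_lower_triangular H"
  shows "det_on (trunc_idx k) (mmult (mmult A H) (mtrans A)) = det_on (trunc_idx k) H"
proof -
  have lowerA: "block_lower_triangular A" by (rule block_lower_unitriangular_imp_triangular[OF A])
  have lowerAH: "block_lower_triangular (mmult A H)"
    by (rule block_lower_triangular_mmult[OF lowerA H])
  have "mmult (mmult A H) (mtrans A) i j
      = (\<Sum>\<gamma>\<in>trunc_idx k. A i \<gamma> * (\<Sum>\<delta>\<in>trunc_idx k. H \<gamma> \<delta> * A j \<delta>))"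
    if ij: "i \<in> trunc_idx k" "j \<in> trunc_idx k" for i j
  proof -
    have "mmult (mmult A H) (mtrans A) i j = (\<Sum>\<delta>\<in>trunc_idx k. mmult A H i \<delta> * mtrans A \<delta> j)"
      by (intro mmult_eq_sum_on block_lower_triangular_row_finite[OF lowerAH] finite_trunc_idx)
         (use block_lower_triangular_row_in_trunc_idx[OF lowerAH ij(1)] in auto)
    also have "\<dots> = (\<Sum>\<delta>\<in>trunc_idx k. \<Sum>\<gamma>\<in>trunc_idx k. A i \<gamma> * H \<gamma> \<delta> * A j \<delta>)"
    proof -
      have "{l. A i l \<noteq> 0} \<subseteq> trunc_idx k"
        using block_lower_triangular_row_in_trunc_idx[OF lowerA ij(1)] by blast
      then show ?thesis
        by (simp add: mmult_eq_sum[OF finite_trunc_idx] sum_distrib_right mtrans_def)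
    qed
    also have "\<dots> = (\<Sum>\<gamma>\<in>trunc_idx k. A i \<gamma> * (\<Sum>\<delta>\<in>trunc_idx k. H \<gamma> \<delta> * A j \<delta>))"
      by (subst sum.swap) (simp add: sum_distrib_left mult.assoc)
    finally show ?thesis .
  qed
  then have "det_on (trunc_idx k) (mmult (mmult A H) (mtrans A))
      = det_on (trunc_idx k) (\<lambda>i j. \<Sum>\<gamma>\<in>trunc_idx k. A i \<gamma> * (\<Sum>\<delta>\<in>trunc_idx k. H \<gamma> \<delta> * A j \<delta>))"
    by (rule det_on_cong)
  also have "\<dots> = det_on (trunc_idx k) H"
    by (rule det_on_trunc_idx_sandwich[OF A])
  finally show ?thesis .
qed

lemma det_on_trunc_idx_mat_poly_eval_jacobi:
  fixes u uc :: "('n::{finite,linorder}) mpoly \<Rightarrow> complex" and Sc Scinv Hc :: "'n smat"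
  assumes lin_uc: "lin_functional uc" and modif: "\<forall>P. uc (Q * P) = u P"
    and Sc: "block_lower_unitriangular Sc" "block_lower_unitriangular Scinv"
           "mmult Sc Scinv = mident" "mmult Scinv Sc = mident"
    and Hc: "block_diagonal Hc"
    and Gc: "moment_matrix uc = mmult (mmult Scinv Hc) (mtrans Scinv)"
  shows "det_on (trunc_idx k) (mat_poly_eval Q (jacobi Sc Scinv)) * det_on (trunc_idx k) Hc
       = det_on (trunc_idx k) (moment_matrix u)"
proof -
  have "det_on (trunc_idx k) (mat_poly_eval Q (jacobi Sc Scinv)) * det_on (trunc_idx k) Hc
      = det_on (trunc_idx k) (\<lambda>i j. \<Sum>l\<in>trunc_idx k. mat_poly_eval Q (jacobi Sc Scinv) i l * Hc l j)"
    by (rule det_on_mult[OF finite_trunc_idx, symmetric])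
  also have "\<dots> = det_on (trunc_idx k)
      (\<lambda>i j. \<Sum>\<gamma>\<in>trunc_idx k. Sc i \<gamma> * (\<Sum>\<delta>\<in>trunc_idx k. moment_matrix u \<gamma> \<delta> * Sc j \<delta>))"
    by (rule det_on_cong) (rule mat_poly_eval_jacobi_mult_trunc[OF lin_uc modif Sc Hc Gc])
  also have "\<dots> = det_on (trunc_idx k) (moment_matrix u)"
    by (rule det_on_trunc_idx_sandwich[OF Sc(1)])
  finally show ?thesis .
qed

theorem mainTheorem1:
  fixes u uc :: "('n::{finite,linorder}) mpoly \<Rightarrow> complex"
    and Q2 :: "'n mpoly"
    and S Sinv H Sc Scinv Hc :: "'n smat"
    and k :: nat
  assumes lin_u: "lin_functional u"
    and lin_uc: "lin_functional uc"
    and modif: "\<forall>P. uc (Q2 * P) = u P"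
    and qd_u: "quasi_definite u"
    and qd_uc: "quasi_definite uc"
    and S: "block_lower_unitriangular S" "block_lower_unitriangular Sinv"
           "mmult S Sinv = mident" "mmult Sinv S = mident"
    and H: "block_diagonal H"
    and G: "moment_matrix u = mmult (mmult Sinv H) (mtrans Sinv)"
    and Sc: "block_lower_unitriangular Sc" "block_lower_unitriangular Scinv"
           "mmult Sc Scinv = mident" "mmult Scinv Sc = mident"
    and Hc: "block_diagonal Hc"
    and Gc: "moment_matrix uc = mmult (mmult Scinv Hc) (mtrans Scinv)"
    and k: "k \<ge> 1"
  shows "det_on (trunc_idx k) (mat_poly_eval Q2 (jacobi Sc Scinv))
           = (\<Prod>l<k. det_on (block_idx l) H / det_on (block_idx l) Hc)
         \<and> det_on (trunc_idx k) (mat_poly_eval Q2 (jacobi Sc Scinv)) \<noteq> 0"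
proof -
  have dG: "det_on (trunc_idx k) (moment_matrix u) = det_on (trunc_idx k) H"
    unfolding G by (rule det_on_trunc_idx_congruence[OF S(2) block_diagonal_imp_lower_triangular[OF H]])
  have dGc: "det_on (trunc_idx k) (moment_matrix uc) = det_on (trunc_idx k) Hc"
    unfolding Gc by (rule det_on_trunc_idx_congruence[OF Sc(2) block_diagonal_imp_lower_triangular[OF Hc]])
  have nz: "det_on (trunc_idx k) H \<noteq> 0" "det_on (trunc_idx k) Hc \<noteq> 0"
    using qd_u qd_uc k by (simp_all add: quasi_definite_def flip: dG dGc)
  have "det_on (trunc_idx k) (mat_poly_eval Q2 (jacobi Sc Scinv)) * det_on (trunc_idx k) Hc
      = det_on (trunc_idx k) H"
    using det_on_trunc_idx_mat_poly_eval_jacobi[OF lin_uc modif Sc Hc Gc] dG by simp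
  then have dM: "det_on (trunc_idx k) (mat_poly_eval Q2 (jacobi Sc Scinv))
      = det_on (trunc_idx k) H / det_on (trunc_idx k) Hc"
    using nz by (simp add: eq_divide_eq)
  then have "det_on (trunc_idx k) (mat_poly_eval Q2 (jacobi Sc Scinv)) \<noteq> 0"
    using nz by simp
  moreover have "det_on (trunc_idx k) H / det_on (trunc_idx k) Hc
      = (\<Prod>l<k. det_on (block_idx l) H / det_on (block_idx l) Hc)"
    by (simp add: det_on_trunc_idx_block_lower_triangular block_diagonal_imp_lower_triangular H Hc
        prod_dividef)
  ultimately show ?thesis using dM by metis
qed

end
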